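(* Let $X=\{x_1,\dots,x_n\}$ be a finite biquandle and let $K_1,K_2$ be virtual knotoid diagrams. Then for all $i,k\in\{1,\dots,n\}$, \[\Phi_{X_{ik}}^{\mathbb{Z}}(K_1K_2)=\sum_{j=1}^{n}\Phi_{X_{ij}}^{\mathbb{Z}}(K_1)\,\Phi_{X_{jk}}^{\mathbb{Z}}(K_2).\]
   Context: A virtual knotoid diagram is an immersed oriented open curve in $S^2$ (oriented from the tail endpoint to the head endpoint) with finitely many transversal double points, each a classical crossing (with over/under information) or a virtual crossing. Product: for virtual knotoid diagrams $K_1,K_2$ in $S^2$ with tails $t_1,t_2$ and heads $h_1,h_2$, let $U$ be a disk neighborhood of $h_1$ meeting $K_1$ in a radius and $V$ a disk neighborhood of $t_2$ meeting $K_2$ in a radius. $K_1K_2$ is obtained by gluing $S^2\setminus\mathrm{Int}(U)$ and $S^2\setminus\mathrm{Int}(V)$ along a homeomorphism $\partial U\to\partial V$ sending the point $K_1\cap\partial U$ to $K_2\cap\partial V$; it is a virtual knotoid diagram in $S^2$ with tail $t_1$ and head $h_2$. A biquandle is a set $X$ with binary operations $\underline{\triangleright},\overline{\triangleright}$ such that for all $x,y,z$: $x\underline{\triangleright}x=x\overline{\triangleright}x$; the maps $x\mapsto x\overline{\triangleright}y$, $x\mapsto x\underline{\triangleright}y$ and $(x,y)\mapsto(y\overline{\triangleright}x,\,x\underline{\triangleright}y)$ are invertible; and $(x\underline{\triangleright}y)\underline{\triangleright}(z\underline{\triangleright}y)=(x\underline{\triangleright}z)\underline{\triangleright}(y\overline{\triangleright}z)$,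 $(x\underline{\triangleright}y)\overline{\triangleright}(z\underline{\triangleright}y)=(x\overline{\triangleright}z)\underline{\triangleright}(y\overline{\triangleright}z)$, $(x\overline{\triangleright}y)\overline{\triangleright}(z\overline{\triangleright}y)=(x\overline{\triangleright}z)\overline{\triangleright}(y\underline{\triangleright}z)$. Semi-arcs are the pieces into which crossings cut the curve; the tail (head) semi-arc contains the tail (head). An $X$-coloring assigns an element of $X$ to each semi-arc such that at each classical crossing, drawn with both strands oriented upward, incoming lower-left and lower-right colors $x,y$ give outgoing upper-left and upper-right colors $y\overline{\triangleright}x$ and $x\underline{\triangleright}y$, and at virtual crossings colors pass through unchanged. An $X_{ij}$-coloring is an $X$-coloring with tail semi-arc colored $x_i$ and head semi-arc colored $x_j$; $\Phi_{X_{ij}}^{\mathbb{Z}}(K)$ denotes the number of $X_{ij}$-colorings of $K$. *)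

theory Defs
  imports Main
begin

text \<open>un x y stands for x underline-triangle y, ov x y for x overline-triangle y.\<close>

definition biquandle :: "('x \<Rightarrow> 'x \<Rightarrow> 'x) \<Rightarrow> ('x \<Rightarrow> 'x \<Rightarrow> 'x) \<Rightarrow> bool" where
  "biquandle un ov \<longleftrightarrow>
     (\<forall>x. un x x = ov x x) \<and>
     (\<forall>y. bij (\<lambda>x. ov x y)) \<and>
     (\<forall>y. bij (\<lambda>x. un x y)) \<and>
     bij (\<lambda>(x, y). (ov y x, un x y)) \<and>
     (\<forall>x y z. un (un x y) (un z y) = un (un x z) (ov y z)) \<and>
     (\<forall>x y z. ov (un x y) (un z y) = un (ov x z) (ov y z)) \<and>
     (\<forall>x y z. ov (ov x y) (ov z y) = ov (ov x z) (un y z))"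

text \<open>A virtual knotoid diagram is encoded by its Gauss code: the list of passages through
classical crossings met when travelling from the tail to the head.  A passage is a triple
(c, l, o): c is the label of the classical crossing, l is True iff this strand is the one
entering the crossing at the lower left (when both strands are drawn pointing upward),
and o is True iff this strand is the over-strand.  Virtual crossings do not change colours
and are therefore not recorded.  Semi-arc number i (0 \<le> i \<le> length K) is the piece of
the curve after the i-th passage; semi-arc 0 is the tail semi-arc and semi-arc (length K)
the head semi-arc.\<close>

type_synonym gauss_code = "(nat \<times> bool \<times> bool) list"

definition wf_knotoid :: "gauss_code \<Rightarrow> bool" where
  "wf_knotoid K \<longleftrightarrow>
     (\<forall>c \<in> fst ` set K.
        length (filter (\<lambda>e. fst e = c) K) = 2 \<and>
        (\<exists>p q o1 o2. p < length K \<and> q < length K \<and>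
            K ! p = (c, True, o1) \<and> K ! q = (c, False, o2) \<and> o1 \<noteq> o2))"

text \<open>Number used to shift crossing labels so that the two factors of a product have
disjoint labels.\<close>
definition label_bound :: "gauss_code \<Rightarrow> nat" where
  "label_bound K = (if K = [] then 0 else Suc (Max (fst ` set K)))"

definition knotoid_prod :: "gauss_code \<Rightarrow> gauss_code \<Rightarrow> gauss_code" where
  "knotoid_prod K1 K2 = K1 @ map (\<lambda>(c, l, v). (c + label_bound K1, l, v)) K2"

text \<open>An X-colouring: a list of colours of the semi-arcs, satisfying the crossing rule:
incoming lower-left colour x (semi-arc p) and lower-right colour y (semi-arc q) give
upper-right colour un x y (semi-arc p+1, continuing the lower-left strand) and
upper-left colour ov y x (semi-arc q+1, continuing the lower-right strand).\<close>
definition is_coloring ::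
  "('x \<Rightarrow> 'x \<Rightarrow> 'x) \<Rightarrow> ('x \<Rightarrow> 'x \<Rightarrow> 'x) \<Rightarrow> gauss_code \<Rightarrow> 'x list \<Rightarrow> bool" where
  "is_coloring un ov K cs \<longleftrightarrow>
     length cs = Suc (length K) \<and>
     (\<forall>p q. p < length K \<and> q < length K \<and> fst (K ! p) = fst (K ! q) \<and>
            fst (snd (K ! p)) \<and> \<not> fst (snd (K ! q)) \<longrightarrow>
              cs ! Suc p = un (cs ! p) (cs ! q) \<and> cs ! Suc q = ov (cs ! q) (cs ! p))"

definition Phi ::
  "('x \<Rightarrow> 'x \<Rightarrow> 'x) \<Rightarrow> ('x \<Rightarrow> 'x \<Rightarrow> 'x) \<Rightarrow> 'x \<Rightarrow> 'x \<Rightarrow> gauss_code \<Rightarrow> nat" where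
  "Phi un ov a b K =
     card {cs. is_coloring un ov K cs \<and> cs ! 0 = a \<and> cs ! length K = b}"

end

theory Submission
  imports Defs
begin

text \<open>Gluing the head semi-arc of K1 to the tail semi-arc of K2 makes them a single semi-arc of
K1K2, and since the crossings of the two factors carry disjoint labels, the crossing conditions
of K1K2 split into those of K1 and those of K2.  So a colouring of K1K2 whose middle semi-arc
has colour x is the same as a pair of colourings of K1 ending in x and of K2 starting in x;
summing over x gives the formula.\<close>

lemma all_less_add_split:
  fixes m n :: nat
  shows "(\<forall>p < m + n. P p) \<longleftrightarrow> (\<forall>p < m. P p) \<and> (\<forall>p < n. P (m + p))"
proof (intro iffI conjI allI impI)
  fix p
  assume "(\<forall>p < m. P p) \<and> (\<forall>p < n. P (m + p))" and "p < m + n"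
  then show "P p"
    by (cases "p < m") (auto dest!: spec[of _ "p - m"])
qed simp_all

lemma is_coloring_append:
  assumes disjoint_labels: "fst ` set K1 \<inter> fst ` set K2 = {}"
  shows "is_coloring un ov (K1 @ K2) cs \<longleftrightarrow>
           length cs = Suc (length K1 + length K2) \<and>
           is_coloring un ov K1 (take (Suc (length K1)) cs) \<and>
           is_coloring un ov K2 (drop (length K1) cs)"
proof (cases "length cs = Suc (length K1 + length K2)")
  case True
  have mixed: "fst (K1 ! p) \<noteq> fst (K2 ! q)" if "p < length K1" "q < length K2" for p q
    using disjoint_labels that by (auto dest!: nth_mem)
  have bounded_pairs: "\<And>N A B. (\<forall>p q. p < N \<and> q < N \<and> A p q \<longrightarrow> B p q) \<longleftrightarrow>
                                   (\<forall>p<N. \<forall>q<N. A p q \<longrightarrow> B p q)"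
    by blast
  from True show ?thesis
    unfolding is_coloring_def length_append bounded_pairs all_less_add_split
    by (simp add: nth_append mixed mixed[symmetric])
next
  case False
  then show ?thesis
    unfolding is_coloring_def length_append by blast
qed

lemma is_coloring_relabel:
  assumes "inj f"
  shows "is_coloring un ov (map (apfst f) K) cs \<longleftrightarrow> is_coloring un ov K cs"
  using assms unfolding is_coloring_def by (simp add: inj_eq cong: conj_cong)

definition colorings ::
  "('x \<Rightarrow> 'x \<Rightarrow> 'x) \<Rightarrow> ('x \<Rightarrow> 'x \<Rightarrow> 'x) \<Rightarrow> 'x \<Rightarrow> 'x \<Rightarrow> gauss_code \<Rightarrow> 'x list set" where
  "colorings un ov a b K = {cs. is_coloring un ov K cs \<and> cs ! 0 = a \<and> cs ! length K = b}"

lemma Phi_eq_card_colorings: "Phi un ov a b K = card (colorings un ov a b K)"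
  unfolding Phi_def colorings_def ..

lemma length_colorings: "cs \<in> colorings un ov a b K \<Longrightarrow> length cs = Suc (length K)"
  unfolding colorings_def is_coloring_def by simp

lemma finite_colorings: "finite (colorings un ov a b (K :: gauss_code) :: 'x::finite list set)"
proof (rule finite_subset)
  show "colorings un ov a b K \<subseteq> {cs. set cs \<subseteq> UNIV \<and> length cs = Suc (length K)}"
    by (auto dest: length_colorings)
qed (rule finite_lists_length_eq, simp)

lemma Phi_relabel: "inj f \<Longrightarrow> Phi un ov a b (map (apfst f) K) = Phi un ov a b K"
  unfolding Phi_def by (simp add: is_coloring_relabel)

lemma take_drop_append_tl:
  assumes "length xs = Suc n" and "ys \<noteq> []" and "xs ! n = ys ! 0"
  shows "take (Suc n) (xs @ tl ys) = xs" and "drop n (xs @ tl ys) = ys"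
proof -
  show "take (Suc n) (xs @ tl ys) = xs" using assms(1) by simp
  have "drop n xs = [xs ! n]"
    using assms(1) Cons_nth_drop_Suc[of n xs] by simp
  then show "drop n (xs @ tl ys) = ys" using assms by (cases ys) auto
qed

lemma bij_betw_colorings_append:
  assumes "fst ` set K1 \<inter> fst ` set K2 = {}"
  shows "bij_betw (\<lambda>cs. (take (Suc (length K1)) cs, drop (length K1) cs))
           {cs \<in> colorings un ov a b (K1 @ K2). cs ! length K1 = x}
           (colorings un ov a x K1 \<times> colorings un ov x b K2)"
proof (rule bij_betw_byWitness[where f' = "\<lambda>(cs1, cs2). cs1 @ tl cs2"])
  let ?n1 = "length K1"
  have split_coloring:
    "cs \<in> colorings un ov a b (K1 @ K2) \<and> cs ! ?n1 = x \<longleftrightarrow>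
       length cs = Suc (?n1 + length K2) \<and>
       take (Suc ?n1) cs \<in> colorings un ov a x K1 \<and> drop ?n1 cs \<in> colorings un ov x b K2"
    for cs
    using assms by (auto simp: colorings_def is_coloring_append)
  have glue: "take (Suc ?n1) (cs1 @ tl cs2) = cs1 \<and> drop ?n1 (cs1 @ tl cs2) = cs2 \<and>
              length (cs1 @ tl cs2) = Suc (?n1 + length K2)"
    if "cs1 \<in> colorings un ov a x K1" and "cs2 \<in> colorings un ov x b K2" for cs1 cs2
  proof -
    have lengths: "length cs1 = Suc ?n1" "length cs2 = Suc (length K2)"
      using that by (auto dest: length_colorings)
    moreover have "cs1 ! ?n1 = cs2 ! 0"
      using that by (simp add: colorings_def)
    moreover have "cs2 \<noteq> []"
      using lengths by auto
    ultimately show ?thesis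
      using take_drop_append_tl[of cs1 ?n1 cs2] by simp
  qed
  show "\<forall>cs \<in> {cs \<in> colorings un ov a b (K1 @ K2). cs ! ?n1 = x}.
          (\<lambda>(cs1, cs2). cs1 @ tl cs2) (take (Suc ?n1) cs, drop ?n1 cs) = cs"
    by (simp add: tl_drop flip: drop_Suc)
  show "\<forall>c \<in> colorings un ov a x K1 \<times> colorings un ov x b K2.
          (\<lambda>cs. (take (Suc ?n1) cs, drop ?n1 cs)) ((\<lambda>(cs1, cs2). cs1 @ tl cs2) c) = c"
    using glue by auto
  show "(\<lambda>cs. (take (Suc ?n1) cs, drop ?n1 cs)) ` {cs \<in> colorings un ov a b (K1 @ K2). cs ! ?n1 = x}
          \<subseteq> colorings un ov a x K1 \<times> colorings un ov x b K2"
    using split_coloring by auto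
  show "(\<lambda>(cs1, cs2). cs1 @ tl cs2) ` (colorings un ov a x K1 \<times> colorings un ov x b K2)
          \<subseteq> {cs \<in> colorings un ov a b (K1 @ K2). cs ! ?n1 = x}"
  proof (rule image_subsetI, clarify)
    fix cs1 cs2
    assume "cs1 \<in> colorings un ov a x K1" and "cs2 \<in> colorings un ov x b K2"
    then show "cs1 @ tl cs2 \<in> colorings un ov a b (K1 @ K2) \<and> (cs1 @ tl cs2) ! ?n1 = x"
      using split_coloring[of "cs1 @ tl cs2"] glue[of cs1 cs2] by simp
  qed
qed

lemma Phi_append:
  fixes un ov :: "'x::finite \<Rightarrow> 'x \<Rightarrow> 'x"
  assumes "fst ` set K1 \<inter> fst ` set K2 = {}"
  shows "Phi un ov a b (K1 @ K2) = (\<Sum>x\<in>UNIV. Phi un ov a x K1 * Phi un ov x b K2)"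
proof -
  let ?fiber = "\<lambda>x. {cs \<in> colorings un ov a b (K1 @ K2). cs ! length K1 = x}"
  have "colorings un ov a b (K1 @ K2) = (\<Union>x. ?fiber x)"
    by auto
  also have "card \<dots> = (\<Sum>x\<in>UNIV. card (?fiber x))"
    by (rule card_UN_disjoint) (auto intro: finite_colorings[THEN rev_finite_subset])
  finally have "Phi un ov a b (K1 @ K2) = (\<Sum>x\<in>UNIV. card (?fiber x))"
    by (simp add: Phi_eq_card_colorings)
  also have "\<dots> = (\<Sum>x\<in>UNIV. card (colorings un ov a x K1 \<times> colorings un ov x b K2))"
    using bij_betw_colorings_append[OF assms] by (intro sum.cong refl bij_betw_same_card)
  finally show ?thesis
    by (simp add: Phi_eq_card_colorings card_cartesian_product)
qed

lemma label_less_label_bound: "c \<in> fst ` set K \<Longrightarrow> c < label_bound K"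
  unfolding label_bound_def by (auto simp: less_Suc_eq_le)

theorem mainTheorem4:
  fixes un ov :: "'x::finite \<Rightarrow> 'x \<Rightarrow> 'x"
    and K1 K2 :: gauss_code
    and xi xk :: 'x
  assumes "biquandle un ov"
    and "wf_knotoid K1" and "wf_knotoid K2"
  shows "Phi un ov xi xk (knotoid_prod K1 K2) =
         (\<Sum>xj\<in>UNIV. Phi un ov xi xj K1 * Phi un ov xj xk K2)"
proof -
  define shift where "shift = (\<lambda>c. c + label_bound K1)"
  have product: "knotoid_prod K1 K2 = K1 @ map (apfst shift) K2"
    by (simp add: knotoid_prod_def shift_def apfst_def map_prod_def split_def)
  have "c < label_bound K1" if "c \<in> fst ` set K1" for c
    using that by (rule label_less_label_bound)
  moreover have "label_bound K1 \<le> c" if "c \<in> fst ` set (map (apfst shift) K2)" for c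
    using that by (auto simp: shift_def)
  ultimately have "fst ` set K1 \<inter> fst ` set (map (apfst shift) K2) = {}"
    by fastforce
  moreover have "inj shift"
    by (simp add: shift_def inj_on_def)
  ultimately show ?thesis
    by (simp add: product Phi_append Phi_relabel)
qed

end
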